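(* Let $J\subseteq\mathbb{Z}$. The elements $u_I$, for $I$ ranging over finite subsets of $J$, form a $\mathbf{k}$-basis of $\mathcal{K}_J$. In particular $\mathcal{K}_n$ has dimension $2^{n-1}$ with basis $\{u_I: I\subseteq\{1,\dots,n-1\}\}$.
   Context: Let $\mathbf{k}$ be a field of characteristic zero and $q\in\mathbf{k}$ an element that is not a nontrivial root of unity. The Klyachko algebra $\mathcal{K}$ is the commutative $\mathbf{k}$-algebra generated by $u_i$, $i\in\mathbb{Z}$, subject to the relations $(q+1)u_i^2=qu_iu_{i-1}+u_iu_{i+1}$ for all $i\in\mathbb{Z}$. For $J\subseteq\mathbb{Z}$, $\mathcal{K}_J$ is the quotient of $\mathcal{K}$ by the ideal generated by the $u_i$ with $i\notin J$ (images of $u_i$ are still denoted $u_i$); $\mathcal{K}_n=\mathcal{K}_{\{1,\dots,n-1\}}$. For finite $I\subset\mathbb{Z}$, $u_I=\prod_{i\in I}u_i$. *)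

theory Defs
  imports Main "HOL-Library.Poly_Mapping"
begin

text \<open>Polynomial ring k[X_i : i in Z], realised as finitely supported maps from
monomials (finitely supported exponent vectors int =>0 nat) to coefficients.\<close>

type_synonym 'k kpoly = "(int \<Rightarrow>\<^sub>0 nat) \<Rightarrow>\<^sub>0 'k"

definition Xv :: "int \<Rightarrow> 'k::comm_ring_1 kpoly" where
  "Xv i = Poly_Mapping.single (Poly_Mapping.single i 1) 1"

definition kconst :: "'k::comm_ring_1 \<Rightarrow> 'k kpoly" where
  "kconst c = Poly_Mapping.single 0 c"

definition klyachko_rel :: "'k::comm_ring_1 \<Rightarrow> int \<Rightarrow> 'k kpoly" where
  "klyachko_rel q i = kconst (q + 1) * Xv i ^ 2 - kconst q * Xv i * Xv (i - 1) - Xv i * Xv (i + 1)"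

definition gen_ideal :: "'a::comm_ring_1 set \<Rightarrow> 'a set" where
  "gen_ideal G = {x. \<exists>S f. finite S \<and> S \<subseteq> G \<and> x = (\<Sum>g\<in>S. f g * g)}"

text \<open>The ideal whose quotient is K_J: Klyachko relations plus u_i for i not in J.\<close>
definition KJ_ideal :: "'k::comm_ring_1 \<Rightarrow> int set \<Rightarrow> 'k kpoly set" where
  "KJ_ideal q J = gen_ideal (range (klyachko_rel q) \<union> Xv ` (- J))"

definition uI :: "int set \<Rightarrow> 'k::comm_ring_1 kpoly" where
  "uI I = (\<Prod>i\<in>I. Xv i)"

definition K_basis :: "'k::field \<Rightarrow> int set \<Rightarrow> bool" where
  "K_basis q J \<longleftrightarrow>
     (\<forall>p :: 'k kpoly. \<exists>S c. finite S \<and> (\<forall>I\<in>S. finite I \<and> I \<subseteq> J) \<and>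
         p - (\<Sum>I\<in>S. kconst (c I) * uI I) \<in> KJ_ideal q J) \<and>
     (\<forall>S c. finite S \<and> (\<forall>I\<in>S. finite I \<and> I \<subseteq> J) \<and>
         (\<Sum>I\<in>S. kconst (c I) * uI I) \<in> KJ_ideal q J \<longrightarrow> (\<forall>I\<in>S. c I = 0))"

end

theory Submission
  imports Defs HOL.Modules "HOL-Library.Multiset"
begin

text \<open>
  Spanning: let \<open>]l, r[\<close> be the block of consecutive elements of \<open>I\<close> containing \<open>i\<close>.
  Modulo the relations, \<open>f x = u\<^sub>x u\<^sub>I\<close> satisfies \<open>(q + 1) f x = q f (x - 1) + f (x + 1)\<close>
  for \<open>l < x < r\<close>, and \<open>f l = u\<^bsub>I\<union>{l}\<^esub>\<close>, \<open>f r = u\<^bsub>I\<union>{r}\<^esub>\<close>. Since the q-integers do not vanish,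
  such a solution is determined by its boundary values, so
  \<open>u\<^sub>i u\<^sub>I = a u\<^bsub>I\<union>{l}\<^esub> + b u\<^bsub>I\<union>{r}\<^esub>\<close> with explicit q-harmonic weights \<open>a, b\<close>: every monomial
  reduces to square-free ones.

  Independence: the same formulas define operators on the span of the square-free
  monomials. They commute (a case analysis on the relative position of the blocks of
  \<open>i\<close> and \<open>j\<close>) and satisfy the relations, so they define a representation of \<open>k[X]\<close>.
  Applied to \<open>1\<close> it fixes every square-free \<open>u\<^sub>I\<close> and sends the ideal of \<open>\<K>\<^sub>J\<close> to vectors
  with vanishing \<open>u\<^sub>I\<close>-coordinates for all \<open>I \<subseteq> J\<close>.
\<close>

section \<open>q-integers and q-harmonic weights\<close>

definition qint :: "'a::comm_semiring_1 \<Rightarrow> nat \<Rightarrow> 'a" where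
  "qint q n = (\<Sum>j<n. q ^ j)"

lemma qint_0 [simp]: "qint q 0 = 0"
  by (simp add: qint_def)

lemma qint_1 [simp]: "qint q (Suc 0) = 1"
  by (simp add: qint_def)

lemma qint_Suc: "qint q (Suc n) = 1 + q * qint q n"
  unfolding qint_def sum.lessThan_Suc_shift by (simp add: sum_distrib_left)

lemma qint_add: "qint q (m + n) = qint q m + q ^ m * qint q n"
  unfolding qint_def by (induct n) (simp_all add: algebra_simps power_add)

definition nonzero_qints :: "'a::comm_semiring_1 \<Rightarrow> bool" where
  "nonzero_qints q \<longleftrightarrow> (\<forall>n>0. qint q n \<noteq> 0)"

lemma nonzero_qints_if_no_nontrivial_root:
  fixes q :: "'a::{idom, ring_char_0}"
  assumes "\<forall>m::nat. m \<ge> 1 \<longrightarrow> q ^ m = 1 \<longrightarrow> q = 1"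
  shows "nonzero_qints q"
  unfolding nonzero_qints_def
proof (intro allI impI)
  fix n :: nat assume "n > 0"
  show "qint q n \<noteq> 0"
  proof (cases "q = 1")
    case True
    then show ?thesis using \<open>n > 0\<close> by (simp add: qint_def)
  next
    case False
    have "(1 - q) * qint q n = 1 - q ^ n"
      unfolding qint_def by (simp add: one_diff_power_eq)
    moreover have "q ^ n \<noteq> 1" using assms False \<open>n > 0\<close> by auto
    ultimately show ?thesis by auto
  qed
qed

text \<open>The solutions of \<open>(q + 1) f m = q f (m - 1) + f (m + 1)\<close> on \<open>[l, r]\<close> with
  \<open>(f l, f r) = (0, 1)\<close> resp. \<open>(1, 0)\<close>.\<close>

definition harm_r :: "'a::field \<Rightarrow> int \<Rightarrow> int \<Rightarrow> int \<Rightarrow> 'a" where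
  "harm_r q l r i = qint q (nat (i - l)) / qint q (nat (r - l))"

definition harm_l :: "'a::field \<Rightarrow> int \<Rightarrow> int \<Rightarrow> int \<Rightarrow> 'a" where
  "harm_l q l r i = 1 - harm_r q l r i"

lemma harm_r_left [simp]: "harm_r q l r l = 0"
  by (simp add: harm_r_def)

lemma harm_l_left [simp]: "harm_l q l r l = 1"
  by (simp add: harm_l_def)

lemma harm_r_right: "nonzero_qints q \<Longrightarrow> l < r \<Longrightarrow> harm_r q l r r = 1"
  by (simp add: harm_r_def nonzero_qints_def)

lemma harm_l_right: "nonzero_qints q \<Longrightarrow> l < r \<Longrightarrow> harm_l q l r r = 0"
  by (simp add: harm_l_def harm_r_right)

lemma harm_l_eq:
  assumes "nonzero_qints q" "l \<le> i" "i \<le> r" "l < r"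
  shows "harm_l q l r i = q ^ nat (i - l) * qint q (nat (r - i)) / qint q (nat (r - l))"
proof -
  have "nat (r - l) = nat (i - l) + nat (r - i)" using assms by auto
  moreover have "qint q (nat (r - l)) \<noteq> 0" using assms by (simp add: nonzero_qints_def)
  ultimately show ?thesis unfolding harm_l_def harm_r_def
    by (simp add: field_simps qint_add)
qed

lemma harm_r_recurrence:
  assumes "l < m"
  shows "(q + 1) * harm_r q l r m - q * harm_r q l r (m - 1) - harm_r q l r (m + 1) = 0"
proof -
  define k where "k = nat (m - l - 1)"
  have "nat (m - l) = Suc k" "nat (m - 1 - l) = k" "nat (m + 1 - l) = Suc (Suc k)"
    using assms unfolding k_def by auto
  then show ?thesis unfolding harm_r_def by (simp add: field_simps qint_Suc add_divide_distrib diff_divide_distrib)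
qed

lemma harm_l_recurrence:
  assumes "l < m"
  shows "(q + 1) * harm_l q l r m - q * harm_l q l r (m - 1) - harm_l q l r (m + 1) = 0"
  using harm_r_recurrence[OF assms, of q r] unfolding harm_l_def by (simp add: algebra_simps)

lemma harm_r_extend_right:
  assumes "nonzero_qints q" "l < r" "r < r'"
  shows "harm_r q l r' i = harm_r q l r i * harm_r q l r' r"
  using assms by (simp add: harm_r_def nonzero_qints_def)

lemma harm_r_cross: "harm_r q l r i * harm_r q l r' j = harm_r q l r j * harm_r q l r' i"
  by (simp add: harm_r_def)

lemma harm_l_extend_left:
  assumes "nonzero_qints q" "l' < l" "l < i" "i < r"
  shows "harm_l q l' r i = harm_l q l r i * harm_l q l' r l"
proof -
  have "nat (i - l') = nat (i - l) + nat (l - l')" using assms by auto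
  then have "q ^ nat (i - l') = q ^ nat (i - l) * q ^ nat (l - l')"
    by (simp add: power_add)
  moreover have "qint q (nat (r - l)) \<noteq> 0" "qint q (nat (r - l')) \<noteq> 0"
    using assms by (simp_all add: nonzero_qints_def)
  ultimately show ?thesis using assms by (simp add: harm_l_eq)
qed

lemma harm_l_cross:
  assumes "nonzero_qints q" "l' < l" "l < i" "i < r" "l < j" "j < r"
  shows "harm_l q l r i * harm_l q l' r j = harm_l q l r j * harm_l q l' r i"
proof -
  have "q ^ nat (i - l) * q ^ nat (j - l') = q ^ nat (j - l) * q ^ nat (i - l')"
  proof -
    have "nat (i - l) + nat (j - l') = nat (j - l) + nat (i - l')" using assms by auto
    then show ?thesis by (metis power_add)
  qed
  then show ?thesis using assms by (simp add: harm_l_eq algebra_simps)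
qed

lemma harm_l_split:
  assumes "nonzero_qints q" "l < j" "j < g" "g < i" "i < r"
  shows "harm_l q g r i * harm_l q l r j = harm_l q l g j * harm_l q g r i + harm_r q l g j * harm_l q l r i"
proof -
  obtain a b c d where abcd: "j = l + int a" "g = j + int b" "i = g + int c" "r = i + int d"
    using assms by (metis less_imp_le zle_iff_zadd)
  then have "a > 0" "b > 0" "c > 0" "d > 0" using assms by auto
  then have nz: "qint q (c + d) \<noteq> 0" "qint q (a + b) \<noteq> 0" "qint q (a + b + c + d) \<noteq> 0"
    using assms(1) by (simp_all add: nonzero_qints_def)
  have weights:
    "harm_l q g r i = q ^ c * qint q d / qint q (c + d)"
    "harm_l q l r j = q ^ a * qint q (b + c + d) / qint q (a + b + c + d)"
    "harm_l q l g j = q ^ a * qint q b / qint q (a + b)"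
    "harm_l q l r i = q ^ (a + b + c) * qint q d / qint q (a + b + c + d)"
    "harm_r q l g j = qint q a / qint q (a + b)"
    using assms abcd by (simp_all add: harm_l_eq harm_r_def nat_add_distrib add.assoc)
  show ?thesis unfolding weights using nz
    by (simp add: field_simps power_add) (simp add: qint_add power_add algebra_simps)
qed

lemma kconst_mult: "kconst a * kconst b = kconst (a * b)"
  by (simp add: kconst_def mult_single)

lemma kconst_add: "kconst (a + b) = kconst a + kconst b"
  by (simp add: kconst_def single_add)

lemma kconst_diff: "kconst (a - b) = kconst a - kconst b"
  by (simp add: kconst_def single_diff)

lemma kconst_1 [simp]: "kconst 1 = 1"
  by (simp add: kconst_def)

lemma kconst_0 [simp]: "kconst 0 = 0"
  by (simp add: kconst_def)

lemma lookup_kconst_mult: "Poly_Mapping.lookup (kconst c * p) a = c * Poly_Mapping.lookup p a"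
proof -
  have "kconst c * p = Poly_Mapping.map ((*) c) p"
    by (simp add: kconst_def mult_map_scale_conv_mult)
  then show ?thesis by (simp add: Poly_Mapping.map.rep_eq when_def)
qed

lemma single_eq_kconst_mult: "Poly_Mapping.single a c = kconst c * (Poly_Mapping.single a 1 :: 'k::comm_ring_1 kpoly)"
  by (simp add: kconst_def mult_single)

lemma kpoly_expand: "p = (\<Sum>a\<in>Poly_Mapping.keys p. Poly_Mapping.single a (Poly_Mapping.lookup p a))"
  by (rule poly_mapping_eqI) (simp add: lookup_sum lookup_single when_def in_keys_iff)

lemma lincomb_regroup:
  fixes a :: "'a::comm_ring_1"
  assumes "a * A = b * B" "a' * C' = b' * D'" "a * A' + a' * C = b * B' + b' * D"
  shows "a * (A * e1 + A' * e2) + a' * (C * e2 + C' * e3) = b * (B * e1 + B' * e2) + b' * (D * e2 + D' * e3)"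
proof -
  have "a * (A * e1 + A' * e2) + a' * (C * e2 + C' * e3) = (a * A) * e1 + (a * A' + a' * C) * e2 + (a' * C') * e3"
    by (simp add: algebra_simps)
  also have "\<dots> = (b * B) * e1 + (b * B' + b' * D) * e2 + (b' * D') * e3"
    using assms by simp
  also have "\<dots> = b * (B * e1 + B' * e2) + b' * (D * e2 + D' * e3)"
    by (simp add: algebra_simps)
  finally show ?thesis .
qed

lemma lincomb_regroup_swap:
  fixes xi :: "'a::comm_ring_1"
  assumes "xi * P = xj * xi + yj * Q" "xi * P' + yi * yj = yj * Q'"
  shows "xi * (P * e1 + P' * e2) + yi * (xj * e3 + yj * e2) = xj * (xi * e1 + yi * e3) + yj * (Q * e1 + Q' * e2)"
proof -
  have "xi * (P * e1 + P' * e2) + yi * (xj * e3 + yj * e2) = (xi * P) * e1 + (xi * P' + yi * yj) * e2 + (yi * xj) * e3"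
    by (simp add: algebra_simps)
  also have "\<dots> = (xj * xi + yj * Q) * e1 + (yj * Q') * e2 + (yi * xj) * e3"
    using assms by simp
  also have "\<dots> = xj * (xi * e1 + yi * e3) + yj * (Q * e1 + Q' * e2)"
    by (simp add: algebra_simps)
  finally show ?thesis .
qed

lemma module_times: "module ((*) :: 'a::comm_ring_1 \<Rightarrow> 'a \<Rightarrow> 'a)"
  by standard (simp_all add: algebra_simps)

lemma gen_ideal_eq_span: "gen_ideal G = module.span (*) G"
  unfolding gen_ideal_def module.span_explicit[OF module_times] by blast

lemma gen_ideal_mult: "x \<in> gen_ideal G \<Longrightarrow> y * x \<in> gen_ideal G"
  unfolding gen_ideal_eq_span by (rule module.span_scale[OF module_times])

lemma gen_ideal_base: "x \<in> G \<Longrightarrow> x \<in> gen_ideal G"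
  unfolding gen_ideal_eq_span by (rule module.span_base[OF module_times])

lemma gen_ideal_minimal: "module.subspace (*) P \<Longrightarrow> G \<subseteq> P \<Longrightarrow> gen_ideal G \<subseteq> P"
  unfolding gen_ideal_eq_span by (rule module.span_minimal[OF module_times])

abbreviation kscale :: "'k::comm_ring_1 \<Rightarrow> 'k kpoly \<Rightarrow> 'k kpoly" where
  "kscale c p \<equiv> kconst c * p"

interpretation kmod: module kscale
  by standard (simp_all add: distrib_left distrib_right kconst_add kconst_mult flip: mult.assoc)

abbreviation klinear :: "('k::comm_ring_1 kpoly \<Rightarrow> 'k kpoly) \<Rightarrow> bool" where
  "klinear \<equiv> module_hom kscale kscale"

lemma klinearI:
  "(\<And>x y. f (x + y) = f x + f y) \<Longrightarrow> (\<And>c x. f (kconst c * x) = kconst c * f x) \<Longrightarrow> klinear f"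
  by (simp add: module_hom_def module_hom_axioms_def kmod.module_axioms)

lemma kmod_subspace_gen_ideal: "kmod.subspace (gen_ideal G)"
  using module.subspace_span[OF module_times, of G]
  unfolding kmod.subspace_def module.subspace_def[OF module_times] gen_ideal_eq_span by blast

definition lin_ext :: "((int \<Rightarrow>\<^sub>0 nat) \<Rightarrow> 'k::comm_ring_1 kpoly) \<Rightarrow> 'k kpoly \<Rightarrow> 'k kpoly" where
  "lin_ext f p = (\<Sum>a\<in>Poly_Mapping.keys p. kconst (Poly_Mapping.lookup p a) * f a)"

lemma lin_ext_superset:
  assumes "finite A" "Poly_Mapping.keys p \<subseteq> A"
  shows "lin_ext f p = (\<Sum>a\<in>A. kconst (Poly_Mapping.lookup p a) * f a)"
  unfolding lin_ext_def using assms by (intro sum.mono_neutral_left) (auto simp: in_keys_iff)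

lemma klinear_lin_ext: "klinear (lin_ext f)"
proof (rule klinearI)
  fix x y :: "'a kpoly"
  let ?A = "Poly_Mapping.keys x \<union> Poly_Mapping.keys y"
  have "lin_ext f (x + y) = (\<Sum>a\<in>?A. kconst (Poly_Mapping.lookup (x + y) a) * f a)"
    using Poly_Mapping.keys_add[of x y] by (intro lin_ext_superset) auto
  also have "\<dots> = (\<Sum>a\<in>?A. kconst (Poly_Mapping.lookup x a) * f a) + (\<Sum>a\<in>?A. kconst (Poly_Mapping.lookup y a) * f a)"
    by (simp add: lookup_add kconst_add sum.distrib algebra_simps)
  also have "\<dots> = lin_ext f x + lin_ext f y"
    by (subst (1 2) lin_ext_superset[symmetric]) auto
  finally show "lin_ext f (x + y) = lin_ext f x + lin_ext f y" .
next
  fix c and x :: "'a kpoly"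
  have "lin_ext f (kconst c * x) = (\<Sum>a\<in>Poly_Mapping.keys x. kconst (Poly_Mapping.lookup (kconst c * x) a) * f a)"
    by (rule lin_ext_superset) (auto simp: in_keys_iff lookup_kconst_mult)
  also have "\<dots> = kconst c * lin_ext f x"
    unfolding lin_ext_def lookup_kconst_mult
    by (simp add: sum_distrib_left flip: kconst_mult mult.assoc)
  finally show "lin_ext f (kconst c * x) = kconst c * lin_ext f x" .
qed

lemma lin_ext_single [simp]: "lin_ext f (Poly_Mapping.single a c) = kconst c * f a"
  by (simp add: lin_ext_def)

lemma lin_ext_cong: "(\<And>a. a \<in> Poly_Mapping.keys p \<Longrightarrow> f a = g a) \<Longrightarrow> lin_ext f p = lin_ext g p"
  by (simp add: lin_ext_def)

lemma lin_ext_compose: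
  assumes "klinear h"
  shows "h (lin_ext f p) = lin_ext (\<lambda>a. h (f a)) p"
proof -
  interpret h: module_hom kscale kscale h by (fact assms)
  show ?thesis unfolding lin_ext_def by (simp add: h.sum h.scale)
qed

section \<open>Square-free monomials and blocks\<close>

definition ind_exp :: "int set \<Rightarrow> (int \<Rightarrow>\<^sub>0 nat)" where
  "ind_exp I = (\<Sum>i\<in>I. Poly_Mapping.single i 1)"

lemma lookup_ind_exp: "finite I \<Longrightarrow> Poly_Mapping.lookup (ind_exp I) k = (if k \<in> I then 1 else 0)"
  unfolding ind_exp_def by (simp add: lookup_sum lookup_single when_def)

lemma keys_ind_exp: "finite I \<Longrightarrow> Poly_Mapping.keys (ind_exp I) = I"
  by (auto simp: in_keys_iff lookup_ind_exp split: if_splits)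

lemma uI_eq_single: "uI I = Poly_Mapping.single (ind_exp I) 1"
proof (cases "finite I")
  case True
  then show ?thesis
    by (induct I rule: finite_induct) (simp_all add: uI_def ind_exp_def Xv_def mult_single)
qed (simp add: uI_def ind_exp_def)

lemma uI_insert: "finite I \<Longrightarrow> i \<notin> I \<Longrightarrow> uI (insert i I) = Xv i * uI I"
  by (simp add: uI_def)

lemma Xv_mult_uI_remove: "finite I \<Longrightarrow> i \<in> I \<Longrightarrow> Xv i * uI (I - {i}) = uI I"
  by (metis Diff_iff finite_Diff insert_Diff singletonI uI_insert)

lemma lookup_uI: "finite I \<Longrightarrow> finite K \<Longrightarrow> Poly_Mapping.lookup (uI I) (ind_exp K) = (if I = K then 1 else 0)"
  by (auto simp: uI_eq_single lookup_single when_def keys_ind_exp dest: arg_cong[of _ _ Poly_Mapping.keys])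

lemma inj_on_uI: "inj_on uI {I. finite I}"
  by (rule inj_onI) (metis lookup_uI mem_Collect_eq zero_neq_one)

definition sqfree_exp :: "(int \<Rightarrow>\<^sub>0 nat) \<Rightarrow> bool" where
  "sqfree_exp a \<longleftrightarrow> (\<forall>k. Poly_Mapping.lookup a k \<le> 1)"

lemma sqfree_exp_eq_ind_exp: "sqfree_exp a \<Longrightarrow> a = ind_exp (Poly_Mapping.keys a)"
proof (rule poly_mapping_eqI)
  fix k assume "sqfree_exp a"
  then have "Poly_Mapping.lookup a k \<le> 1" by (simp add: sqfree_exp_def)
  then show "Poly_Mapping.lookup a k = Poly_Mapping.lookup (ind_exp (Poly_Mapping.keys a)) k"
    by (cases "Poly_Mapping.lookup a k") (auto simp: lookup_ind_exp in_keys_iff)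
qed

lemma sqfree_exp_ind_exp [simp]: "finite I \<Longrightarrow> sqfree_exp (ind_exp I)"
  by (simp add: sqfree_exp_def lookup_ind_exp)

text \<open>For \<open>x \<in> I\<close>, the block of consecutive elements of \<open>I\<close> containing \<open>x\<close> is
  \<open>]gap_left I x, gap_right I x[\<close>.\<close>

definition gap_left :: "int set \<Rightarrow> int \<Rightarrow> int" where
  "gap_left I x = x - int (LEAST k. 0 < k \<and> x - int k \<notin> I)"

definition gap_right :: "int set \<Rightarrow> int \<Rightarrow> int" where
  "gap_right I x = x + int (LEAST k. 0 < k \<and> x + int k \<notin> I)"

lemma gap_left:
  assumes "finite I"
  shows "gap_left I x < x" "gap_left I x \<notin> I" "\<And>y. gap_left I x < y \<Longrightarrow> y < x \<Longrightarrow> y \<in> I"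
proof -
  let ?P = "\<lambda>k. 0 < k \<and> x - int k \<notin> I"
  have "Min (insert x I) \<le> y" if "y \<in> insert x I" for y
    using assms that by simp
  then have "?P (nat (x - Min (insert x I)) + 1)"
    by fastforce
  then have "?P (LEAST k. ?P k)" by (rule LeastI)
  then show "gap_left I x < x" "gap_left I x \<notin> I" by (auto simp: gap_left_def)
  fix y assume y: "gap_left I x < y" "y < x"
  then have "nat (x - y) < (LEAST k. ?P k)" by (auto simp: gap_left_def)
  from not_less_Least[OF this] y show "y \<in> I" by auto
qed

lemma gap_right:
  assumes "finite I"
  shows "x < gap_right I x" "gap_right I x \<notin> I" "\<And>y. x < y \<Longrightarrow> y < gap_right I x \<Longrightarrow> y \<in> I"
proof -
  let ?P = "\<lambda>k. 0 < k \<and> x + int k \<notin> I"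
  have "y \<le> Max (insert x I)" if "y \<in> insert x I" for y
    using assms that by simp
  then have "?P (nat (Max (insert x I) - x) + 1)"
    by fastforce
  then have "?P (LEAST k. ?P k)" by (rule LeastI)
  then show "x < gap_right I x" "gap_right I x \<notin> I" by (auto simp: gap_right_def)
  fix y assume y: "x < y" "y < gap_right I x"
  then have "nat (y - x) < (LEAST k. ?P k)" by (auto simp: gap_right_def)
  from not_less_Least[OF this] y show "y \<in> I" by auto
qed

lemma gap_left_eqI:
  assumes "finite I" "l < x" "l \<notin> I" "\<And>y. l < y \<Longrightarrow> y < x \<Longrightarrow> y \<in> I"
  shows "gap_left I x = l"
  using gap_left[OF assms(1), of x] assms(2-4) by (meson linorder_neqE)

lemma gap_right_eqI:
  assumes "finite I" "x < r" "r \<notin> I" "\<And>y. x < y \<Longrightarrow> y < r \<Longrightarrow> y \<in> I"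
  shows "gap_right I x = r"
  using gap_right[OF assms(1), of x] assms(2-4) by (meson linorder_neqE)

lemma gap_left_insert: "finite I \<Longrightarrow> y \<noteq> gap_left I x \<Longrightarrow> gap_left (insert y I) x = gap_left I x"
  by (rule gap_left_eqI) (use gap_left in auto)

lemma gap_right_insert: "finite I \<Longrightarrow> y \<noteq> gap_right I x \<Longrightarrow> gap_right (insert y I) x = gap_right I x"
  by (rule gap_right_eqI) (use gap_right in auto)

lemma gap_left_insert_gap:
  assumes "finite I"
  shows "gap_left (insert (gap_left I x) I) x = gap_left I (gap_left I x)"
  using gap_left[OF assms, of x] gap_left[OF assms, of "gap_left I x"]
  by (intro gap_left_eqI) (auto simp: assms, meson linorder_neqE)

lemma gap_right_insert_gap:
  assumes "finite I"
  shows "gap_right (insert (gap_right I x) I) x = gap_right I (gap_right I x)"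
  using gap_right[OF assms, of x] gap_right[OF assms, of "gap_right I x"]
  by (intro gap_right_eqI) (auto simp: assms, meson linorder_neqE)

lemma gap_right_gap_left:
  assumes "finite I" "x \<in> I"
  shows "gap_right I (gap_left I x) = gap_right I x"
proof (rule gap_right_eqI[OF assms(1)])
  fix y assume "gap_left I x < y" "y < gap_right I x"
  then show "y \<in> I"
    using gap_left[OF assms(1), of x] gap_right[OF assms(1), of x] assms(2) by (metis linorder_neqE)
qed (use gap_left[OF assms(1), of x] gap_right[OF assms(1), of x] in auto)

lemma gap_left_gap_right:
  assumes "finite I" "x \<in> I"
  shows "gap_left I (gap_right I x) = gap_left I x"
proof (rule gap_left_eqI[OF assms(1)])
  fix y assume "gap_left I x < y" "y < gap_right I x"
  then show "y \<in> I"
    using gap_left[OF assms(1), of x] gap_right[OF assms(1), of x] assms(2) by (metis linorder_neqE)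
qed (use gap_left[OF assms(1), of x] gap_right[OF assms(1), of x] in auto)

lemma gap_right_insert_gap_left:
  "finite I \<Longrightarrow> x \<in> I \<Longrightarrow> gap_right (insert (gap_left I x) I) (gap_left I x) = gap_right I x"
  using gap_right_insert[of I "gap_left I x" "gap_left I x"] gap_right_gap_left[of I x]
    gap_right[of I "gap_left I x"] by auto

lemma gap_left_insert_gap_right:
  "finite I \<Longrightarrow> x \<in> I \<Longrightarrow> gap_left (insert (gap_right I x) I) (gap_right I x) = gap_left I x"
  using gap_left_insert[of I "gap_right I x" "gap_right I x"] gap_left_gap_right[of I x]
    gap_left[of I "gap_right I x"] by auto

section \<open>Commuting operators on square-free monomials\<close>

definition act_basis :: "'k::field \<Rightarrow> int \<Rightarrow> int set \<Rightarrow> 'k kpoly" where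
  "act_basis q i I =
     (if i \<in> I then
        kconst (harm_l q (gap_left I i) (gap_right I i) i) * uI (insert (gap_left I i) I)
      + kconst (harm_r q (gap_left I i) (gap_right I i) i) * uI (insert (gap_right I i) I)
      else uI (insert i I))"

text \<open>Only the values of \<open>act q i\<close> on square-free monomials matter; elsewhere it is zero.\<close>

definition act :: "'k::field \<Rightarrow> int \<Rightarrow> 'k kpoly \<Rightarrow> 'k kpoly" where
  "act q i = lin_ext (\<lambda>a. if sqfree_exp a then act_basis q i (Poly_Mapping.keys a) else 0)"

lemma klinear_act: "klinear (act q i)"
  unfolding act_def by (rule klinear_lin_ext)

lemma act_uI: "finite I \<Longrightarrow> act q i (uI I) = act_basis q i I"
  by (simp add: act_def uI_eq_single keys_ind_exp)

lemma act_act_basis: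
  assumes "finite I"
  shows "act q j (act_basis q i I) =
    (if i \<in> I then
       kconst (harm_l q (gap_left I i) (gap_right I i) i) * act_basis q j (insert (gap_left I i) I)
     + kconst (harm_r q (gap_left I i) (gap_right I i) i) * act_basis q j (insert (gap_right I i) I)
     else act_basis q j (insert i I))"
proof -
  interpret module_hom kscale kscale "act q j" by (rule klinear_act)
  show ?thesis using assms by (simp add: act_basis_def add scale act_uI)
qed

lemma act_basis_insert_own_gap_left:
  assumes f: "finite I" and x: "x \<in> I"
  defines "L \<equiv> gap_left I x" and "R \<equiv> gap_right I x"
  shows "act_basis q x (insert L I) =
    kconst (harm_l q (gap_left I L) R x) * uI (insert (gap_left I L) (insert L I))
    + kconst (harm_r q (gap_left I L) R x) * uI (insert L (insert R I))"
proof -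
  have "gap_left (insert L I) x = gap_left I L" "gap_right (insert L I) x = R"
    using gap_left_insert_gap[OF f, of x] gap_right_insert[OF f, of L x] gap_left[OF f, of x]
      gap_right[OF f, of x] by (auto simp: L_def R_def)
  then show ?thesis using x by (simp add: act_basis_def insert_commute)
qed

lemma act_basis_insert_own_gap_right:
  assumes f: "finite I" and x: "x \<in> I"
  defines "L \<equiv> gap_left I x" and "R \<equiv> gap_right I x"
  shows "act_basis q x (insert R I) =
    kconst (harm_l q L (gap_right I R) x) * uI (insert L (insert R I))
    + kconst (harm_r q L (gap_right I R) x) * uI (insert (gap_right I R) (insert R I))"
proof -
  have "gap_right (insert R I) x = gap_right I R" "gap_left (insert R I) x = L"
    using gap_right_insert_gap[OF f, of x] gap_left_insert[OF f, of R x] gap_left[OF f, of x]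
      gap_right[OF f, of x] by (auto simp: L_def R_def)
  then show ?thesis using x by (simp add: act_basis_def insert_commute)
qed

lemma act_basis_insert_gap_left:
  assumes q: "nonzero_qints q" and f: "finite I" and i: "i \<in> I"
  defines "L \<equiv> gap_left I i" and "R \<equiv> gap_right I i"
  shows "act_basis q i (insert L I) =
    kconst (harm_l q L R i) * act_basis q L (insert L I) + kconst (harm_r q L R i) * act_basis q L (insert R I)"
proof -
  define L' where "L' = gap_left I L"
  have LR: "L < i" "i < R" "L \<notin> I" "R \<notin> I"
    using gap_left[OF f, of i] gap_right[OF f, of i] by (auto simp: L_def R_def)
  have L': "L' < L" "L' \<notin> I" using gap_left[OF f, of L] by (auto simp: L'_def)
  have gaps: "gap_left (insert L I) i = L'" "gap_right (insert L I) i = R"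
    "gap_left (insert L I) L = L'" "gap_right (insert L I) L = R"
    using gap_left_insert_gap[OF f, of i] gap_right_insert[OF f, of L i] gap_left_insert[OF f, of L L]
      gap_right_insert_gap_left[OF f i] LR L' by (simp_all add: L_def R_def L'_def)
  have hl: "harm_l q L' R i = harm_l q L R i * harm_l q L' R L"
    using harm_l_extend_left[OF q L'(1) LR(1) LR(2)] .
  then have hr: "harm_r q L' R i = harm_l q L R i * harm_r q L' R L + harm_r q L R i"
    unfolding harm_l_def by (simp add: algebra_simps)
  show ?thesis using LR i
    by (simp add: act_basis_def gaps insert_commute hl hr kconst_mult kconst_add algebra_simps)
qed

lemma act_basis_insert_gap_right:
  assumes q: "nonzero_qints q" and f: "finite I" and i: "i \<in> I"
  defines "L \<equiv> gap_left I i" and "R \<equiv> gap_right I i"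
  shows "act_basis q i (insert R I) =
    kconst (harm_l q L R i) * act_basis q R (insert L I) + kconst (harm_r q L R i) * act_basis q R (insert R I)"
proof -
  define R' where "R' = gap_right I R"
  have LR: "L < i" "i < R" "L \<notin> I" "R \<notin> I"
    using gap_left[OF f, of i] gap_right[OF f, of i] by (auto simp: L_def R_def)
  have R': "R < R'" "R' \<notin> I" using gap_right[OF f, of R] by (auto simp: R'_def)
  have gaps: "gap_right (insert R I) i = R'" "gap_left (insert R I) i = L"
    "gap_right (insert R I) R = R'" "gap_left (insert R I) R = L"
    using gap_right_insert_gap[OF f, of i] gap_left_insert[OF f, of R i] gap_right_insert[OF f, of R R]
      gap_left_insert_gap_right[OF f i] LR R' by (simp_all add: L_def R_def R'_def)
  have hr: "harm_r q L R' i = harm_r q L R i * harm_r q L R' R"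
    using harm_r_extend_right[OF q _ R'(1), of L i] LR by simp
  then have hl: "harm_l q L R' i = harm_l q L R i + harm_r q L R i * harm_l q L R' R"
    unfolding harm_l_def by (simp add: algebra_simps)
  show ?thesis using LR i
    by (simp add: act_basis_def gaps insert_commute hl hr kconst_mult kconst_add algebra_simps)
qed

lemma act_comm_mem_nonmem:
  assumes q: "nonzero_qints q" and f: "finite I" and i: "i \<in> I" and j: "j \<notin> I"
  shows "act q j (act_basis q i I) = act q i (act_basis q j I)"
proof -
  define L where "L = gap_left I i"
  define R where "R = gap_right I i"
  have "act_basis q i (insert j I) =
      kconst (harm_l q L R i) * act_basis q j (insert L I) + kconst (harm_r q L R i) * act_basis q j (insert R I)"
  proof -
    consider "j = L" | "j = R" | "j \<noteq> L" "j \<noteq> R" by blast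
    then show ?thesis
    proof cases
      case 3
      then have "gap_left (insert j I) i = L" "gap_right (insert j I) i = R"
        using gap_left_insert[OF f, of j i] gap_right_insert[OF f, of j i] by (auto simp: L_def R_def)
      then show ?thesis using i j 3 by (simp add: act_basis_def insert_commute)
    qed (use act_basis_insert_gap_left[OF q f i] act_basis_insert_gap_right[OF q f i] in \<open>simp_all add: L_def R_def\<close>)
  qed
  then show ?thesis using f i j by (simp add: act_act_basis L_def R_def)
qed

lemma act_comm_same_block:
  assumes q: "nonzero_qints q" and f: "finite I" and i: "i \<in> I" and j: "j \<in> I"
    and same: "gap_left I i = gap_left I j"
  shows "act q j (act_basis q i I) = act q i (act_basis q j I)"
proof -
  define L where "L = gap_left I i"
  define R where "R = gap_right I i"
  define L' where "L' = gap_left I L"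
  define R' where "R' = gap_right I R"
  have block: "gap_left I x = L" "gap_right I x = R" if "x = i \<or> x = j" for x
    using that same gap_right_gap_left[OF f i] gap_right_gap_left[OF f j] by (auto simp: L_def R_def)
  have LR: "L < i" "i < R" "L < j" "j < R" "L \<notin> I" "R \<notin> I"
    using gap_left[OF f, of i] gap_right[OF f, of i] gap_left[OF f, of j] gap_right[OF f, of j] block
    by auto
  have L': "L' < L" using gap_left[OF f, of L] by (simp add: L'_def)
  have R': "R < R'" using gap_right[OF f, of R] by (simp add: R'_def)
  have step_left: "act_basis q x (insert L I) =
      kconst (harm_l q L' R x) * uI (insert L' (insert L I)) + kconst (harm_r q L' R x) * uI (insert L (insert R I))"
    and step_right: "act_basis q x (insert R I) =
      kconst (harm_l q L R' x) * uI (insert L (insert R I)) + kconst (harm_r q L R' x) * uI (insert R' (insert R I))"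
    if "x = i \<or> x = j" for x
    using that i j act_basis_insert_own_gap_left[OF f, of x] act_basis_insert_own_gap_right[OF f, of x]
      block[OF that] by (auto simp: L'_def R'_def)
  have c1: "harm_l q L R i * harm_l q L' R j = harm_l q L R j * harm_l q L' R i"
    using harm_l_cross[OF q L' LR(1-4)] .
  note c2 = harm_r_cross[of q L R i R' j]
  have c3: "harm_l q L R i * harm_r q L' R j + harm_r q L R i * harm_l q L R' j =
      harm_l q L R j * harm_r q L' R i + harm_r q L R j * harm_l q L R' i"
    using c1 c2 unfolding harm_l_def by (simp add: algebra_simps)
  show ?thesis
    unfolding act_act_basis[OF f] L_def[symmetric] R_def[symmetric]
    by (simp add: i j block f step_left step_right, rule lincomb_regroup)
      (use c1 c2 c3 in \<open>simp_all add: kconst_mult flip: kconst_add\<close>)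
qed

lemma act_comm_separate_blocks:
  assumes f: "finite I" and i: "i \<in> I" and j: "j \<in> I"
    and sep: "gap_right I j < gap_left I i"
  shows "act q j (act_basis q i I) = act q i (act_basis q j I)"
proof -
  define Li where "Li = gap_left I i"
  define Ri where "Ri = gap_right I i"
  define Lj where "Lj = gap_left I j"
  define Rj where "Rj = gap_right I j"
  have "Li < i" "i < Ri" "Lj < j" "j < Rj" "Rj < Li"
    using gap_left[OF f] gap_right[OF f] sep by (auto simp: Li_def Ri_def Lj_def Rj_def)
  then have gaps: "gap_left (insert y I) i = Li" "gap_right (insert y I) i = Ri"
      "gap_left (insert z I) j = Lj" "gap_right (insert z I) j = Rj"
    if "y = Lj \<or> y = Rj" "z = Li \<or> z = Ri" for y z
    using that gap_left_insert[OF f] gap_right_insert[OF f] by (auto simp: Li_def Ri_def Lj_def Rj_def)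
  show ?thesis
    using i j gaps[of Lj Li] gaps[of Rj Ri] unfolding act_act_basis[OF f]
    by (simp add: act_basis_def insert_commute Li_def[symmetric] Ri_def[symmetric]
        Lj_def[symmetric] Rj_def[symmetric] algebra_simps)
qed

lemma act_comm_adjacent_blocks:
  assumes q: "nonzero_qints q" and f: "finite I" and i: "i \<in> I" and j: "j \<in> I"
    and adj: "gap_right I j = gap_left I i"
  shows "act q j (act_basis q i I) = act q i (act_basis q j I)"
proof -
  define M where "M = gap_left I i"
  define R where "R = gap_right I i"
  define L where "L = gap_left I j"
  have LMR: "L < j" "j < M" "M < i" "i < R" "L \<notin> I" "M \<notin> I" "R \<notin> I"
    using gap_left[OF f, of i] gap_right[OF f, of i] gap_left[OF f, of j] gap_right[OF f, of j] adj
    by (auto simp: M_def R_def L_def)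
  have gR: "gap_right I M = R" using gap_right_gap_left[OF f i] by (simp add: M_def R_def)
  have gL: "gap_left I M = L" using gap_left_gap_right[OF f j] adj by (simp add: M_def L_def)
  have gaps:
    "gap_left (insert M I) j = L" "gap_right (insert M I) j = R"
    "gap_left (insert R I) j = L" "gap_right (insert R I) j = M"
    "gap_left (insert L I) i = M" "gap_right (insert L I) i = R"
    "gap_left (insert M I) i = L" "gap_right (insert M I) i = R"
    using gap_left_insert[OF f] gap_right_insert[OF f] gap_left_insert_gap[OF f, of i]
      gap_right_insert_gap[OF f, of j] gR gL LMR adj
    by (auto simp: M_def R_def L_def)
  have c1: "harm_l q M R i * harm_l q L R j = harm_l q L M j * harm_l q M R i + harm_r q L M j * harm_l q L R i"
    using harm_l_split[OF q LMR(1-4)] .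
  have c2: "harm_l q M R i * harm_r q L R j + harm_r q M R i * harm_r q L M j = harm_r q L M j * harm_r q L R i"
    using c1 unfolding harm_l_def by (simp add: algebra_simps)
  show ?thesis
    unfolding act_act_basis[OF f]
    by (simp add: i j LMR adj act_basis_def gaps insert_commute flip: M_def R_def L_def,
        rule lincomb_regroup_swap)
      (use c1 c2 in \<open>simp_all add: kconst_mult flip: kconst_add\<close>)
qed

lemma gap_right_le_gap_left:
  assumes f: "finite I" and "i \<in> I" "j \<in> I" "j < i" "gap_left I i \<noteq> gap_left I j"
  shows "gap_right I j \<le> gap_left I i"
proof -
  have "j < gap_left I i"
  proof (rule ccontr)
    assume "\<not> j < gap_left I i"
    moreover have "gap_left I i \<noteq> j" using gap_left[OF f, of i] \<open>j \<in> I\<close> by auto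
    ultimately have "gap_left I i < j" by simp
    then have "gap_left I j = gap_left I i"
      using gap_left[OF f, of i] \<open>j < i\<close> by (intro gap_left_eqI[OF f]) auto
    with assms(5) show False by simp
  qed
  then show ?thesis using gap_right[OF f, of j] gap_left[OF f, of i] by (meson not_le)
qed

lemma act_comm_act_basis:
  assumes q: "nonzero_qints q" and f: "finite I"
  shows "act q j (act_basis q i I) = act q i (act_basis q j I)"
proof -
  have mem_mem: "act q j (act_basis q i I) = act q i (act_basis q j I)"
    if "i \<in> I" "j \<in> I" "j < i" "gap_left I i \<noteq> gap_left I j" for i j
    using gap_right_le_gap_left[OF f that] act_comm_separate_blocks[OF f that(1,2)]
      act_comm_adjacent_blocks[OF q f that(1,2)] by (auto simp: le_less)
  consider "i \<notin> I" "j \<notin> I" | "i \<in> I" "j \<notin> I" | "i \<notin> I" "j \<in> I"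
    | "i \<in> I" "j \<in> I" "gap_left I i = gap_left I j"
    | "i \<in> I" "j \<in> I" "gap_left I i \<noteq> gap_left I j"
    by blast
  then show ?thesis
  proof cases
    case 1
    then show ?thesis using f by (cases "i = j") (simp_all add: act_basis_def act_uI insert_commute)
  next
    case 2
    then show ?thesis using act_comm_mem_nonmem[OF q f] by simp
  next
    case 3
    then show ?thesis using act_comm_mem_nonmem[OF q f, of j i] by simp
  next
    case 4
    then show ?thesis using act_comm_same_block[OF q f] by simp
  next
    case 5
    then show ?thesis using mem_mem[of i j] mem_mem[of j i] by (cases i j rule: linorder_cases) auto
  qed
qed

lemma act_comm:
  assumes "nonzero_qints q"
  shows "act q i (act q j p) = act q j (act q i p)"
proof -
  have "act q i (act q j p) = lin_ext (\<lambda>a. act q i (if sqfree_exp a then act_basis q j (Poly_Mapping.keys a) else 0)) p"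
    unfolding act_def[of q j] by (rule lin_ext_compose[OF klinear_act])
  also have "\<dots> = lin_ext (\<lambda>a. act q j (if sqfree_exp a then act_basis q i (Poly_Mapping.keys a) else 0)) p"
    using act_comm_act_basis[OF assms] by (intro lin_ext_cong) (simp add: module_hom.zero[OF klinear_act])
  also have "\<dots> = act q j (act q i p)"
    unfolding act_def[of q i] by (rule lin_ext_compose[OF klinear_act, symmetric])
  finally show ?thesis .
qed

section \<open>Linear independence\<close>

definition monom_list :: "(int \<Rightarrow>\<^sub>0 nat) \<Rightarrow> int list" where
  "monom_list a = concat (map (\<lambda>k. replicate (Poly_Mapping.lookup a k) k) (sorted_list_of_set (Poly_Mapping.keys a)))"

lemma count_mset_monom_list: "count (mset (monom_list a)) k = Poly_Mapping.lookup a k"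
proof -
  have "count (mset (concat (map (\<lambda>k. replicate (f k) k) ks))) x = (if x \<in> set ks then f x else 0)"
    if "distinct ks" for f :: "int \<Rightarrow> nat" and ks x
    using that by (induct ks) auto
  then show ?thesis unfolding monom_list_def by (auto simp: in_keys_iff)
qed

lemma prod_list_Xv_monom_list: "prod_list (map Xv (monom_list a)) = Poly_Mapping.single a (1::'k::comm_ring_1)"
proof -
  have "prod_list (map Xv L) = Poly_Mapping.single (\<Sum>k\<leftarrow>L. Poly_Mapping.single k 1) (1::'k)" for L
    by (induct L) (simp_all add: Xv_def mult_single)
  moreover have "Poly_Mapping.lookup (\<Sum>k\<leftarrow>L. Poly_Mapping.single k (1::nat)) x = count (mset L) x" for L x
    by (induct L) (auto simp: lookup_add lookup_single when_def)
  ultimately show ?thesis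
    by (metis (no_types) count_mset_monom_list poly_mapping_eqI)
qed

lemma kpoly_eq_sum_monom_lists:
  "p = (\<Sum>a\<in>Poly_Mapping.keys p. kconst (Poly_Mapping.lookup p a) * prod_list (map Xv (monom_list a)))"
  by (subst kpoly_expand) (simp add: prod_list_Xv_monom_list flip: single_eq_kconst_mult)

text \<open>The representation of \<open>k[X]\<close> in which \<open>X\<^sub>i\<close> acts by \<open>act q i\<close>, evaluated at \<open>u\<^sub>\<emptyset> = 1\<close>.\<close>

definition rep :: "'k::field \<Rightarrow> 'k kpoly \<Rightarrow> 'k kpoly" where
  "rep q = lin_ext (\<lambda>a. fold (act q) (monom_list a) 1)"

lemma klinear_rep: "klinear (rep q)"
  unfolding rep_def by (rule klinear_lin_ext)

lemma rep_1: "rep q 1 = 1"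
proof -
  have "rep q (Poly_Mapping.single 0 1) = 1"
    unfolding rep_def lin_ext_single by (simp add: monom_list_def)
  then show ?thesis by simp
qed

lemma rep_Xv_mult:
  assumes q: "nonzero_qints q"
  shows "rep q (Xv i * p) = act q i (rep q p)"
proof -
  interpret act: module_hom kscale kscale "act q i" by (rule klinear_act)
  have fold_step: "fold (act q) (monom_list (Poly_Mapping.single i 1 + a)) 1 = act q i (fold (act q) (monom_list a) 1)"
    for a
  proof -
    have "mset (monom_list (Poly_Mapping.single i 1 + a)) = mset (monom_list a @ [i])"
      by (rule multiset_eqI) (simp add: count_mset_monom_list lookup_add lookup_single when_def)
    then have "fold (act q) (monom_list (Poly_Mapping.single i 1 + a)) = fold (act q) (monom_list a @ [i])"
      by (intro fold_multiset_equiv) (auto simp: fun_eq_iff act_comm[OF q])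
    then show ?thesis by simp
  qed
  interpret rep: module_hom kscale kscale "rep q" by (rule klinear_rep)
  have rep_single: "rep q (Poly_Mapping.single a c) = kconst c * fold (act q) (monom_list a) 1" for a c
    by (simp add: rep_def)
  have "Xv i * p = (\<Sum>a\<in>Poly_Mapping.keys p. Poly_Mapping.single (Poly_Mapping.single i 1 + a) (Poly_Mapping.lookup p a))"
    by (subst kpoly_expand[of p]) (simp add: sum_distrib_left Xv_def mult_single)
  then have "rep q (Xv i * p) = (\<Sum>a\<in>Poly_Mapping.keys p. kconst (Poly_Mapping.lookup p a) * act q i (fold (act q) (monom_list a) 1))"
    by (simp only: rep.sum rep_single fold_step)
  also have "\<dots> = act q i (rep q p)"
    by (simp add: rep_def lin_ext_def act.sum act.scale)
  finally show ?thesis .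
qed

lemma rep_uI:
  assumes "nonzero_qints q" "finite I"
  shows "rep q (uI I) = uI I"
  using assms(2)
proof (induct I rule: finite_induct)
  case empty
  then show ?case by (simp add: uI_def rep_1)
next
  case (insert i I)
  then show ?case by (simp add: uI_insert rep_Xv_mult[OF assms(1)] act_uI act_basis_def)
qed

lemma rep_klyachko_rel:
  assumes q: "nonzero_qints q"
  shows "rep q (klyachko_rel q i) = 0"
proof -
  interpret rep: module_hom kscale kscale "rep q" by (rule klinear_rep)
  have gaps: "gap_left {i} i = i - 1" "gap_right {i} i = i + 1"
    by (auto intro: gap_left_eqI gap_right_eqI)
  have "qint q 2 \<noteq> 0" using q by (simp add: nonzero_qints_def)
  moreover have "qint q 2 = 1 + q" by (simp add: qint_def numeral_2_eq_2)
  ultimately have hl: "(q + 1) * harm_l q (i - 1) (i + 1) i = q" and hr: "(q + 1) * harm_r q (i - 1) (i + 1) i = 1"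
    by (simp_all add: harm_l_def harm_r_def field_simps)
  have sq: "rep q (Xv i ^ 2) = kconst (harm_l q (i - 1) (i + 1) i) * (Xv (i - 1) * Xv i)
      + kconst (harm_r q (i - 1) (i + 1) i) * (Xv (i + 1) * Xv i)"
    using rep_Xv_mult[OF q, of i "Xv i"] rep_uI[OF q, of "{i}"] act_uI[of "{i}" q i]
    by (simp add: power2_eq_square uI_def act_basis_def gaps)
  have prods: "rep q (Xv i * Xv (i - 1)) = Xv (i - 1) * Xv i" "rep q (Xv i * Xv (i + 1)) = Xv (i + 1) * Xv i"
    using rep_uI[OF q, of "{i - 1, i}"] rep_uI[OF q, of "{i + 1, i}"] by (simp_all add: uI_def mult.commute)
  have "klyachko_rel q i = kconst (q + 1) * Xv i ^ 2 - kconst q * (Xv i * Xv (i - 1)) - Xv i * Xv (i + 1)"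
    by (simp add: klyachko_rel_def mult.assoc)
  then have "rep q (klyachko_rel q i) =
      kconst (q + 1) * rep q (Xv i ^ 2) - kconst q * rep q (Xv i * Xv (i - 1)) - rep q (Xv i * Xv (i + 1))"
    by (simp only: rep.diff rep.scale)
  also have "\<dots> = 0"
    unfolding sq prods by (simp add: distrib_left kconst_mult hl hr flip: mult.assoc)
  finally show ?thesis .
qed

definition null_on :: "int set \<Rightarrow> 'k::comm_ring_1 kpoly set" where
  "null_on J = {v. \<forall>I. finite I \<and> I \<subseteq> J \<longrightarrow> Poly_Mapping.lookup v (ind_exp I) = 0}"

lemma kmod_subspace_null_on: "kmod.subspace (null_on J)"
  by (simp add: kmod.subspace_def null_on_def lookup_add lookup_kconst_mult)

lemma uI_null_on: "finite K \<Longrightarrow> \<not> K \<subseteq> J \<Longrightarrow> uI K \<in> null_on J"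
  by (auto simp: null_on_def lookup_uI)

lemma act_null_on:
  assumes "v \<in> null_on J"
  shows "act q i v \<in> null_on J"
  unfolding act_def lin_ext_def
proof (intro kmod.subspace_sum[OF kmod_subspace_null_on] kmod.subspace_scale[OF kmod_subspace_null_on])
  fix a assume a: "a \<in> Poly_Mapping.keys v"
  show "(if sqfree_exp a then act_basis q i (Poly_Mapping.keys a) else 0) \<in> null_on J"
  proof (cases "sqfree_exp a")
    case True
    define K where "K = Poly_Mapping.keys a"
    have "a = ind_exp K" "finite K" using sqfree_exp_eq_ind_exp[OF True] by (simp_all add: K_def)
    then have "\<not> K \<subseteq> J" "finite K" using assms a by (auto simp: null_on_def in_keys_iff)
    then show ?thesis using True unfolding K_def[symmetric] act_basis_def
      by (auto intro!: kmod.subspace_add[OF kmod_subspace_null_on] kmod.subspace_scale[OF kmod_subspace_null_on] uI_null_on)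
  qed (simp add: kmod.subspace_0[OF kmod_subspace_null_on])
qed

lemma rep_mult_null_on:
  assumes q: "nonzero_qints q" and g: "rep q g \<in> null_on J"
  shows "rep q (f * g) \<in> null_on J"
proof -
  interpret rep: module_hom kscale kscale "rep q" by (rule klinear_rep)
  have prod: "rep q (prod_list (map Xv L) * g) \<in> null_on J" for L
    by (induct L) (simp_all add: g mult.assoc rep_Xv_mult[OF q] act_null_on)
  have "f * g = (\<Sum>a\<in>Poly_Mapping.keys f. kconst (Poly_Mapping.lookup f a) * (prod_list (map Xv (monom_list a)) * g))"
    by (subst kpoly_eq_sum_monom_lists) (simp add: sum_distrib_right mult.assoc)
  then show ?thesis
    by (simp add: rep.sum rep.scale kmod.subspace_sum[OF kmod_subspace_null_on]
        kmod.subspace_scale[OF kmod_subspace_null_on] prod)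
qed

lemma rep_KJ_ideal:
  assumes q: "nonzero_qints q"
  shows "rep q ` KJ_ideal q J \<subseteq> null_on J"
proof -
  interpret rep: module_hom kscale kscale "rep q" by (rule klinear_rep)
  have "module.subspace (*) {x. rep q x \<in> null_on J}"
    using kmod.subspace_0[OF kmod_subspace_null_on] kmod.subspace_add[OF kmod_subspace_null_on]
    by (auto simp: module.subspace_def[OF module_times] rep.add rep_mult_null_on[OF q])
  moreover have "range (klyachko_rel q) \<union> Xv ` (- J) \<subseteq> {x. rep q x \<in> null_on J}"
    using rep_klyachko_rel[OF q] rep_uI[OF q, of "{_}"] uI_null_on[of "{_}" J]
    by (auto simp: kmod.subspace_0[OF kmod_subspace_null_on] uI_def)
  ultimately show ?thesis unfolding KJ_ideal_def by (blast dest: gen_ideal_minimal)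
qed

lemma uI_independent:
  fixes q :: "'k::field"
  assumes q: "nonzero_qints q" and S: "finite S" "\<forall>I\<in>S. finite I \<and> I \<subseteq> J"
    and mem: "(\<Sum>I\<in>S. kconst (c I) * uI I) \<in> KJ_ideal q J"
    and I0: "I0 \<in> S"
  shows "c I0 = 0"
proof -
  interpret rep: module_hom kscale kscale "rep q" by (rule klinear_rep)
  let ?v = "\<Sum>I\<in>S. kconst (c I) * uI I"
  have "rep q ?v = (\<Sum>I\<in>S. kconst (c I) * rep q (uI I))"
    by (simp only: rep.sum rep.scale)
  also have "\<dots> = ?v"
    using S by (intro sum.cong) (simp_all add: rep_uI[OF q])
  finally have "rep q ?v = ?v" .
  moreover have "rep q ?v \<in> null_on J"
    using mem by (intro subsetD[OF rep_KJ_ideal[OF q]] imageI)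
  ultimately have "Poly_Mapping.lookup ?v (ind_exp I0) = 0"
    using S I0 by (simp add: null_on_def)
  moreover have "Poly_Mapping.lookup ?v (ind_exp I0) = (\<Sum>I\<in>S. c I * (if I = I0 then 1 else 0))"
    using S I0 by (simp add: lookup_sum lookup_kconst_mult lookup_uI)
  also have "\<dots> = (\<Sum>I\<in>S. if I = I0 then c I else 0)"
    by (rule sum.cong) auto
  also have "\<dots> = c I0"
    using S(1) I0 by simp
  ultimately show ?thesis by simp
qed

section \<open>Spanning\<close>

lemma q_harmonic_cong_qint_mult:
  fixes q :: "'k::comm_ring_1" and d :: "nat \<Rightarrow> 'k kpoly"
  assumes V: "kmod.subspace V" and start: "d 0 \<in> V"
    and rec: "\<And>m. 0 < m \<Longrightarrow> m < n \<Longrightarrow> kconst (q + 1) * d m - kconst q * d (m - 1) - d (m + 1) \<in> V"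
    and "m \<le> n"
  shows "d m - kconst (qint q m) * d 1 \<in> V"
  using \<open>m \<le> n\<close>
proof (induct m rule: less_induct)
  case (less m)
  note sub = kmod.subspace_diff[OF V] kmod.subspace_scale[OF V]
  consider "m = 0" | "m = 1" | k where "m = Suc (Suc k)"
    by (metis One_nat_def not0_implies_Suc)
  then show ?case
  proof cases
    case 1
    then show ?thesis using start by simp
  next
    case 2
    then show ?thesis using kmod.subspace_0[OF V] by simp
  next
    case 3
    have Q: "kconst (qint q (Suc (Suc k))) = kconst (q + 1) * kconst (qint q (Suc k)) - kconst q * kconst (qint q k)"
      by (simp add: qint_Suc kconst_mult algebra_simps flip: kconst_diff)
    have "d m - kconst (qint q m) * d 1 =
        kconst (q + 1) * (d (Suc k) - kconst (qint q (Suc k)) * d 1) - kconst q * (d k - kconst (qint q k) * d 1)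
        - (kconst (q + 1) * d (Suc k) - kconst q * d k - d (Suc (Suc k)))"
      unfolding 3 Q by (simp add: algebra_simps)
    also have "\<dots> \<in> V"
    proof -
      have IH: "d (Suc k) - kconst (qint q (Suc k)) * d 1 \<in> V" "d k - kconst (qint q k) * d 1 \<in> V"
        using less 3 by simp_all
      have "kconst (q + 1) * d (Suc k) - kconst q * d k - d (Suc (Suc k)) \<in> V"
        using less.prems 3 rec[of "Suc k"] by simp
      then show ?thesis by (rule sub(1)[OF sub(1)[OF sub(2)[OF IH(1)] sub(2)[OF IH(2)]]])
    qed
    finally show ?thesis .
  qed
qed

lemma q_harmonic_in_subspace:
  fixes q :: "'k::field" and d :: "nat \<Rightarrow> 'k kpoly"
  assumes V: "kmod.subspace V" and nz: "qint q n \<noteq> 0"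
    and ends: "d 0 \<in> V" "d n \<in> V"
    and rec: "\<And>m. 0 < m \<Longrightarrow> m < n \<Longrightarrow> kconst (q + 1) * d m - kconst q * d (m - 1) - d (m + 1) \<in> V"
    and "m \<le> n"
  shows "d m \<in> V"
proof -
  note sub = kmod.subspace_add[OF V] kmod.subspace_diff[OF V] kmod.subspace_scale[OF V]
  have cong: "d k - kconst (qint q k) * d 1 \<in> V" if "k \<le> n" for k
    by (rule q_harmonic_cong_qint_mult[where d = d, OF V ends(1)]) (use rec that in auto)
  have "kconst (qint q n) * d 1 \<in> V"
    using sub(2)[OF ends(2) cong[of n]] by simp
  then have "kconst (1 / qint q n) * (kconst (qint q n) * d 1) \<in> V"
    by (rule sub(3))
  then have "d 1 \<in> V"
    using nz by (simp add: kconst_mult flip: mult.assoc)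
  then have "(d m - kconst (qint q m) * d 1) + kconst (qint q m) * d 1 \<in> V"
    using sub(1)[OF cong[OF \<open>m \<le> n\<close>] sub(3)] by blast
  then show ?thesis by simp
qed

lemma klyachko_rel_uI_in_KJ_ideal:
  assumes "finite I" "m \<in> I"
  shows "kconst (q + 1) * (Xv m * uI I) - kconst q * (Xv (m - 1) * uI I) - Xv (m + 1) * uI I \<in> KJ_ideal q J"
proof -
  have "klyachko_rel q m * uI (I - {m}) \<in> KJ_ideal q J"
    unfolding KJ_ideal_def mult.commute[of "klyachko_rel q m"] by (intro gen_ideal_mult gen_ideal_base) simp
  moreover have "klyachko_rel q m * uI (I - {m}) =
      kconst (q + 1) * Xv m * (Xv m * uI (I - {m})) - kconst q * Xv (m - 1) * (Xv m * uI (I - {m}))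
      - Xv (m + 1) * (Xv m * uI (I - {m}))"
    unfolding klyachko_rel_def by (simp add: algebra_simps power2_eq_square)
  ultimately show ?thesis
    by (simp add: Xv_mult_uI_remove[OF assms] mult.assoc)
qed

lemma kmod_subspace_KJ_ideal: "kmod.subspace (KJ_ideal q J)"
  unfolding KJ_ideal_def by (rule kmod_subspace_gen_ideal)

definition reduction_defect :: "'k::field \<Rightarrow> int \<Rightarrow> int \<Rightarrow> int set \<Rightarrow> int \<Rightarrow> 'k kpoly" where
  "reduction_defect q l r I x = Xv x * uI I
     - (kconst (harm_l q l r x) * uI (insert l I) + kconst (harm_r q l r x) * uI (insert r I))"

lemma reduction_defect_recurrence:
  assumes f: "finite I" and M: "l < M" "M \<in> I"
  shows "kconst (q + 1) * reduction_defect q l r I M - kconst q * reduction_defect q l r I (M - 1)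
    - reduction_defect q l r I (M + 1) \<in> KJ_ideal q J"
proof -
  have coeffs: "kconst (q + 1) * kconst (h q l r M) - kconst q * kconst (h q l r (M - 1)) - kconst (h q l r (M + 1)) = 0"
    if "h = harm_l \<or> h = harm_r" for h :: "'a \<Rightarrow> int \<Rightarrow> int \<Rightarrow> int \<Rightarrow> 'a"
    using that harm_l_recurrence[OF M(1), of q r] harm_r_recurrence[OF M(1), of q r]
    by (auto simp: kconst_mult simp flip: kconst_diff)
  have "kconst (q + 1) * reduction_defect q l r I M - kconst q * reduction_defect q l r I (M - 1)
      - reduction_defect q l r I (M + 1) =
      kconst (q + 1) * (Xv M * uI I) - kconst q * (Xv (M - 1) * uI I) - Xv (M + 1) * uI I
      - ((kconst (q + 1) * kconst (harm_l q l r M) - kconst q * kconst (harm_l q l r (M - 1))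
          - kconst (harm_l q l r (M + 1))) * uI (insert l I)
        + (kconst (q + 1) * kconst (harm_r q l r M) - kconst q * kconst (harm_r q l r (M - 1))
          - kconst (harm_r q l r (M + 1))) * uI (insert r I))"
    unfolding reduction_defect_def by (simp add: algebra_simps)
  also have "\<dots> \<in> KJ_ideal q J"
    using coeffs klyachko_rel_uI_in_KJ_ideal[OF f M(2)] by simp
  finally show ?thesis .
qed

lemma Xv_mult_uI_cong_act_basis:
  fixes q :: "'k::field"
  assumes q: "nonzero_qints q" and f: "finite I"
  shows "Xv i * uI I - act_basis q i I \<in> KJ_ideal q J"
proof (cases "i \<in> I")
  case False
  then show ?thesis
    using f kmod.subspace_0[OF kmod_subspace_KJ_ideal] by (simp add: act_basis_def uI_insert)
next
  case True
  define L where "L = gap_left I i"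
  define R where "R = gap_right I i"
  define n where "n = nat (R - L)"
  have LR: "L < i" "i < R" "L \<notin> I" "R \<notin> I" "R = L + int n"
    using gap_left[OF f, of i] gap_right[OF f, of i] by (auto simp: L_def R_def n_def)
  have inI: "m \<in> I" if "L < m" "m < R" for m
    using gap_left(3)[OF f, of i m] gap_right(3)[OF f, of i m] True that
    by (cases "m < i"; cases "m = i") (auto simp: L_def R_def)
  let ?d = "\<lambda>m. reduction_defect q L R I (L + int m)"
  have "?d (nat (i - L)) \<in> KJ_ideal q J"
  proof (rule q_harmonic_in_subspace[OF kmod_subspace_KJ_ideal])
    show "qint q n \<noteq> 0" using q LR by (simp add: nonzero_qints_def)
    show "?d 0 \<in> KJ_ideal q J" "?d n \<in> KJ_ideal q J"
      using f q LR kmod.subspace_0[OF kmod_subspace_KJ_ideal]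
      by (simp_all add: reduction_defect_def uI_insert harm_l_right harm_r_right)
    show "nat (i - L) \<le> n" using LR by simp
  next
    fix m assume m: "0 < m" "m < n"
    have "L + int (m - 1) = L + int m - 1" "L + int (m + 1) = L + int m + 1"
      using m by auto
    moreover have "L + int m \<in> I"
      using inI m LR by simp
    ultimately show "kconst (q + 1) * ?d m - kconst q * ?d (m - 1) - ?d (m + 1) \<in> KJ_ideal q J"
      using reduction_defect_recurrence[OF f, of L "L + int m" q R J] m by (simp only:)
  qed
  then show ?thesis
    using True LR by (simp add: reduction_defect_def act_basis_def L_def[symmetric] R_def[symmetric])
qed

definition span_mod_KJ :: "'k::field \<Rightarrow> int set \<Rightarrow> 'k kpoly set" where
  "span_mod_KJ q J = kmod.span (uI ` {I. finite I \<and> I \<subseteq> J} \<union> KJ_ideal q J)"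

lemma KJ_ideal_subset_span_mod_KJ: "KJ_ideal q J \<subseteq> span_mod_KJ q J"
  unfolding span_mod_KJ_def using kmod.span_superset by blast

lemma uI_in_span_mod_KJ:
  assumes "finite K"
  shows "uI K \<in> span_mod_KJ q J"
proof (cases "K \<subseteq> J")
  case True
  then show ?thesis using assms unfolding span_mod_KJ_def by (blast intro: kmod.span_base)
next
  case False
  then obtain k where k: "k \<in> K" "k \<notin> J" by auto
  have "uI (K - {k}) * Xv k \<in> KJ_ideal q J"
    unfolding KJ_ideal_def using k(2) by (intro gen_ideal_mult gen_ideal_base) simp
  then have "uI K \<in> KJ_ideal q J"
    using Xv_mult_uI_remove[OF assms k(1)] by (metis mult.commute)
  then show ?thesis using KJ_ideal_subset_span_mod_KJ by blast
qed

lemma Xv_mult_in_span_mod_KJ: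
  fixes q :: "'k::field"
  assumes q: "nonzero_qints q" and v: "v \<in> span_mod_KJ q J"
  shows "Xv i * v \<in> span_mod_KJ q J"
proof -
  let ?V = "span_mod_KJ q J"
  have V: "kmod.subspace ?V" unfolding span_mod_KJ_def by (rule kmod.subspace_span)
  from v show ?thesis
    unfolding span_mod_KJ_def
  proof (induct rule: kmod.span_induct)
    case base
    show ?case
      using kmod.subspace_0[OF V] kmod.subspace_add[OF V] kmod.subspace_scale[OF V]
      unfolding kmod.subspace_def span_mod_KJ_def[symmetric]
      by (simp add: distrib_left) (metis mult.left_commute)
  next
    case (step x)
    then consider I where "x = uI I" "finite I" | "x \<in> KJ_ideal q J" by blast
    then show ?case
    proof cases
      case 1
      have "Xv i * uI I - act_basis q i I \<in> ?V"
        using Xv_mult_uI_cong_act_basis[OF q 1(2)] KJ_ideal_subset_span_mod_KJ by blast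
      moreover have "act_basis q i I \<in> ?V"
        using 1(2) unfolding act_basis_def
        by (auto intro!: kmod.subspace_add[OF V] kmod.subspace_scale[OF V] uI_in_span_mod_KJ)
      ultimately have "(Xv i * uI I - act_basis q i I) + act_basis q i I \<in> ?V"
        by (rule kmod.subspace_add[OF V])
      then show ?thesis using 1 by (simp add: span_mod_KJ_def)
    next
      case 2
      then have "Xv i * x \<in> KJ_ideal q J" unfolding KJ_ideal_def by (rule gen_ideal_mult)
      then show ?thesis using KJ_ideal_subset_span_mod_KJ by (auto simp: span_mod_KJ_def)
    qed
  qed
qed

lemma span_mod_KJ_eq_UNIV:
  fixes q :: "'k::field"
  assumes "nonzero_qints q"
  shows "span_mod_KJ q J = UNIV"
proof -
  have V: "kmod.subspace (span_mod_KJ q J)" unfolding span_mod_KJ_def by (rule kmod.subspace_span)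
  have "prod_list (map Xv L) \<in> span_mod_KJ q J" for L
    using uI_in_span_mod_KJ[of "{}" q J]
    by (induct L) (simp_all add: uI_def Xv_mult_in_span_mod_KJ[OF assms])
  then have "p \<in> span_mod_KJ q J" for p
    by (subst kpoly_eq_sum_monom_lists) (intro kmod.subspace_sum[OF V] kmod.subspace_scale[OF V])
  then show ?thesis by blast
qed

lemma uI_spanning:
  fixes q :: "'k::field"
  assumes "nonzero_qints q"
  shows "\<exists>S c. finite S \<and> (\<forall>I\<in>S. finite I \<and> I \<subseteq> J) \<and> p - (\<Sum>I\<in>S. kconst (c I) * uI I) \<in> KJ_ideal q J"
proof -
  have "p \<in> {b + x | b x. b \<in> kmod.span (uI ` {I. finite I \<and> I \<subseteq> J}) \<and> x \<in> kmod.span (KJ_ideal q J)}"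
    using span_mod_KJ_eq_UNIV[OF assms, of J] unfolding span_mod_KJ_def kmod.span_Un by blast
  moreover have "kmod.span (KJ_ideal q J) = KJ_ideal q J"
    by (simp add: kmod_subspace_KJ_ideal)
  ultimately obtain b x where b: "b \<in> kmod.span (uI ` {I. finite I \<and> I \<subseteq> J})"
    and x: "x \<in> KJ_ideal q J" and p: "p = b + x"
    by auto
  obtain t r where t: "finite t" "t \<subseteq> uI ` {I. finite I \<and> I \<subseteq> J}" and b_eq: "b = (\<Sum>a\<in>t. kconst (r a) * a)"
    using b unfolding kmod.span_explicit by blast
  obtain S where S: "S \<subseteq> {I. finite I \<and> I \<subseteq> J}" "finite S" "t = uI ` S"
    using finite_subset_image[OF t] by blast
  have "inj_on (uI :: int set \<Rightarrow> 'k kpoly) S" using inj_on_subset[OF inj_on_uI, of S] S(1) by blast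
  then have "b = (\<Sum>I\<in>S. kconst (r (uI I)) * uI I)"
    unfolding b_eq S(3) by (simp add: sum.reindex)
  then show ?thesis using S x p by (intro exI[of _ S] exI[of _ "r \<circ> uI"]) auto
qed

theorem K_basis_if_nonzero_qints:
  fixes q :: "'k::field"
  assumes "nonzero_qints q"
  shows "K_basis q J"
  unfolding K_basis_def
proof (intro conjI allI impI ballI)
  fix p :: "'k kpoly"
  show "\<exists>S c. finite S \<and> (\<forall>I\<in>S. finite I \<and> I \<subseteq> J) \<and> p - (\<Sum>I\<in>S. kconst (c I) * uI I) \<in> KJ_ideal q J"
    by (rule uI_spanning[OF assms])
next
  fix S c I
  assume "finite S \<and> (\<forall>I\<in>S. finite I \<and> I \<subseteq> J) \<and> (\<Sum>I\<in>S. kconst (c I) * uI I) \<in> KJ_ideal q J" "I \<in> S"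
  then show "c I = 0" using uI_independent[OF assms] by blast
qed

theorem mainTheorem2:
  fixes q :: "'k::field_char_0"
  assumes "\<forall>m::nat. m \<ge> 1 \<longrightarrow> q ^ m = 1 \<longrightarrow> q = 1"
  shows "(\<forall>J. K_basis q J) \<and>
         (\<forall>n::nat. n \<ge> 1 \<longrightarrow> K_basis q {1..int n - 1} \<and>
             card {I. I \<subseteq> {1..int n - 1}} = 2 ^ (n - 1))"
proof -
  have "K_basis q J" for J
    by (rule K_basis_if_nonzero_qints[OF nonzero_qints_if_no_nontrivial_root[OF assms]])
  moreover have "card {I. I \<subseteq> {1..int n - 1}} = 2 ^ (n - 1)" for n :: nat
    using card_Pow[of "{1..int n - 1}"] by (simp add: Pow_def)
  ultimately show ?thesis by simp
qed

end
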